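(* Let $N\ge1$, $K\ge2$ be integers and let $\alpha$ be a real number with $\alpha<\frac{2}{K}$. Then in $\mathcal{B}_\alpha(N,K)$ no pure strategy is weakly dominated by another pure strategy.
   Context: Fix integers $N\ge1$, $K\ge2$ and a real number $\alpha$. The Colonel Blotto game $\mathcal{B}_\alpha(N,K)$ is the two-player simultaneous-move game with players $A,B$, each with pure strategy set $S=\{s\in\{0,1,\ldots,N\}^K:\sum_{k=1}^K s_k=N\}$, in which the payoff of player $i$ at the pure profile $(s^i,s^{-i})$ is $\pi^i(s^i,s^{-i})=\sum_{k=1}^K\big(\mathbf 1[s^i_k>s^{-i}_k]+\tfrac{\alpha}{2}\mathbf 1[s^i_k=s^{-i}_k]\big)$. A pure strategy $s\in S$ is weakly dominated by a pure strategy $\hat s\in S$ if $\pi^i(s,t)\le\pi^i(\hat s,t)$ for all $t\in S$ and $\pi^i(s,t)<\pi^i(\hat s,t)$ for at least one $t\in S$. *)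

theory Defs
  imports Main "HOL.Real"
begin

text \<open>Represented as
  functions nat => nat that vanish outside {0..<K} (canonical representation).\<close>

definition strategies :: "nat \<Rightarrow> nat \<Rightarrow> (nat \<Rightarrow> nat) set" where
  "strategies N K = {s. (\<forall>k. K \<le> k \<longrightarrow> s k = 0) \<and> (\<Sum>k<K. s k) = N}"

definition payoff :: "real \<Rightarrow> nat \<Rightarrow> (nat \<Rightarrow> nat) \<Rightarrow> (nat \<Rightarrow> nat) \<Rightarrow> real" where
  "payoff \<alpha> K s t =
     (\<Sum>k<K. (if s k > t k then 1 else 0) + (if s k = t k then \<alpha> / 2 else 0))"

definition weakly_dominated ::
  "real \<Rightarrow> nat \<Rightarrow> nat \<Rightarrow> (nat \<Rightarrow> nat) \<Rightarrow> (nat \<Rightarrow> nat) \<Rightarrow> bool" where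
  "weakly_dominated \<alpha> N K s s' \<longleftrightarrow>
     (\<forall>t\<in>strategies N K. payoff \<alpha> K s t \<le> payoff \<alpha> K s' t) \<and>
     (\<exists>t\<in>strategies N K. payoff \<alpha> K s t < payoff \<alpha> K s' t)"

end

theory Submission
  imports Defs
begin

text \<open>Against itself a strategy ties on every battlefield and earns K\<alpha>/2. A different
  strategy with the same total must win some battlefield against it, earning at least
  1 there and at least min 0 (\<alpha>/2) on each of the other K - 1 battlefields; since
  K\<alpha> < 2 this exceeds K\<alpha>/2. Hence, facing a would-be dominating strategy, the
  dominated one does strictly better than that strategy itself.\<close>

lemma payoff_self: "payoff \<alpha> K s s = real K * \<alpha> / 2"
  by (simp add: payoff_def)

lemma payoff_ge_if_wins_battlefield:
  assumes "k0 < K" and "t k0 < s k0"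
  shows "payoff \<alpha> K s t \<ge> 1 + (real K - 1) * min 0 (\<alpha> / 2)"
proof -
  define g where "g k = (if s k > t k then 1 else 0) + (if s k = t k then \<alpha> / 2 else (0::real))"
    for k
  have "(\<Sum>k\<in>{..<K} - {k0}. min 0 (\<alpha> / 2)) \<le> (\<Sum>k\<in>{..<K} - {k0}. g k)"
    by (intro sum_mono) (auto simp: g_def)
  moreover have "(\<Sum>k\<in>{..<K} - {k0}. min 0 (\<alpha> / 2)) = (real K - 1) * min 0 (\<alpha> / 2)"
    using assms(1) by (simp add: of_nat_diff)
  moreover have "payoff \<alpha> K s t = g k0 + (\<Sum>k\<in>{..<K} - {k0}. g k)"
    using assms(1) by (simp add: payoff_def g_def sum.remove)
  moreover have "g k0 = 1"
    using assms(2) by (simp add: g_def)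
  ultimately show ?thesis by linarith
qed

lemma payoff_self_less_if_wins_battlefield:
  assumes "k0 < K" and "t k0 < s k0" and "\<alpha> < 2 / real K"
  shows "payoff \<alpha> K t t < payoff \<alpha> K s t"
proof -
  have "real K * \<alpha> < 2"
    using assms(1,3) by (simp add: field_simps)
  then have "real K * \<alpha> / 2 < 1 + (real K - 1) * min 0 (\<alpha> / 2)"
    by (cases "\<alpha> \<ge> 0") (auto simp: min_def field_simps)
  then show ?thesis
    using payoff_ge_if_wins_battlefield[of k0 K t s \<alpha>] assms(1,2) by (simp add: payoff_self)
qed

lemma strategies_distinct_wins_battlefield:
  assumes s: "s \<in> strategies N K" and t: "t \<in> strategies N K" and "s \<noteq> t"
  obtains k where "k < K" and "t k < s k"
proof (rule ccontr)
  assume "\<not> thesis"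
  then have le: "\<forall>k<K. s k \<le> t k"
    using that by (meson not_le)
  have "\<forall>k<K. s k = t k"
  proof (rule ccontr)
    assume "\<not> (\<forall>k<K. s k = t k)"
    then obtain k where "k < K" "s k < t k"
      using le by (meson le_neq_implies_less)
    then have "(\<Sum>k<K. s k) < (\<Sum>k<K. t k)"
      using le by (intro sum_strict_mono_ex1) auto
    then show False
      using s t by (simp add: strategies_def)
  qed
  then have "s k = t k" for k
    using s t by (cases "k < K") (auto simp: strategies_def)
  then have "s = t" ..
  then show False
    using \<open>s \<noteq> t\<close> by contradiction
qed

theorem proposition4:
  fixes N K :: nat and \<alpha> :: real
  assumes "N \<ge> 1" and "K \<ge> 2" and "\<alpha> < 2 / real K"
  shows "\<forall>s\<in>strategies N K. \<forall>s'\<in>strategies N K. \<not> weakly_dominated \<alpha> N K s s'"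
proof (intro ballI notI)
  fix s s'
  assume s: "s \<in> strategies N K" and s': "s' \<in> strategies N K"
    and dominated: "weakly_dominated \<alpha> N K s s'"
  then have "s \<noteq> s'"
    by (auto simp: weakly_dominated_def)
  then obtain k where "k < K" and "s' k < s k"
    using strategies_distinct_wins_battlefield[OF s s'] by blast
  then have "payoff \<alpha> K s' s' < payoff \<alpha> K s s'"
    using assms(3) by (rule payoff_self_less_if_wins_battlefield)
  moreover have "payoff \<alpha> K s s' \<le> payoff \<alpha> K s' s'"
    using dominated s' by (auto simp: weakly_dominated_def)
  ultimately show False
    by linarith
qed

end
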